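(* Let $p,q\ge2$ and $n\ge1$. If $A\in\Omega_1(p,n)$ and $B\in\Omega_1(q,n)$, then $A\times B\in\Omega_1(p+q-2,n)$.
   Context: Let $I_n=\{1,\dots,n\}$. A $d$-dimensional matrix of order $n$ is a function $I_n^d\to\mathbb R$; write $a_{i_1\cdots i_d}=A(i_1,\dots,i_d)$. A line is the set of positions obtained by varying one coordinate and fixing the others. $\Omega_1(d,n)$ is the set of non-negative $d$-dimensional matrices of order $n$ whose entries in every line sum to $1$. For a $p$-dimensional $A$ and a $q$-dimensional $B$ of order $n$, the product $A\times B$ is the $(p+q-2)$-dimensional matrix of order $n$ with $(A\times B)_{i_1\cdots i_{p+q-2}}=\sum_{j=1}^n a_{i_1\cdots i_{p-1}j}\,b_{j i_p\cdots i_{p+q-2}}$. *)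

theory Defs
  imports Complex_Main
begin

text \<open>A d-dimensional matrix of order n is modelled as a function on index lists;
  only its values on index lists of length d with entries in {1..n} matter.\<close>

definition mindices :: "nat \<Rightarrow> nat \<Rightarrow> nat list set" where
  "mindices d n = {xs. length xs = d \<and> set xs \<subseteq> {1..n}}"

definition Omega1 :: "nat \<Rightarrow> nat \<Rightarrow> (nat list \<Rightarrow> real) set" where
  "Omega1 d n = {A. (\<forall>xs\<in>mindices d n. 0 \<le> A xs) \<and>
     (\<forall>xs\<in>mindices d n. \<forall>k<d. (\<Sum>j=1..n. A (xs[k := j])) = 1)}"

definition mprod :: "nat \<Rightarrow> nat \<Rightarrow> (nat list \<Rightarrow> real) \<Rightarrow> (nat list \<Rightarrow> real) \<Rightarrow> (nat list \<Rightarrow> real)" where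
  "mprod p n A B = (\<lambda>is. \<Sum>j=1..n. A (take (p - 1) is @ [j]) * B (j # drop (p - 1) is))"

end

theory Submission
  imports Defs
begin

text \<open>For a line of
  \<open>A \<times> B\<close> in one of its first \<open>p - 1\<close> directions, exchanging the two sums makes the
  inner sum a line of \<open>A\<close>, equal to 1, and what remains is a line of \<open>B\<close> in its first
  direction. Symmetrically, a line in one of the last \<open>q - 1\<close> directions reduces to lines
  of \<open>B\<close> and then to a line of \<open>A\<close> in its last direction.\<close>

lemma mindices_take_append:
  assumes "xs \<in> mindices (p + q - 2) n" "1 \<le> p" "1 \<le> q" "j \<in> {1..n}"
  shows "take (p - 1) xs @ [j] \<in> mindices p n"
  using assms unfolding mindices_def by (auto dest: in_set_takeD)

lemma mindices_Cons_drop: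
  assumes "xs \<in> mindices (p + q - 2) n" "1 \<le> p" "1 \<le> q" "j \<in> {1..n}"
  shows "j # drop (p - 1) xs \<in> mindices q n"
  using assms unfolding mindices_def by (auto dest: in_set_dropD)

lemma mindices_list_update:
  assumes "xs \<in> mindices d n" "i \<in> {1..n}"
  shows "xs[k := i] \<in> mindices d n"
  using assms set_update_subset_insert[of xs k i] unfolding mindices_def by auto

lemma mindices_nth:
  assumes "xs \<in> mindices d n" "k < d"
  shows "xs ! k \<in> {1..n}"
proof -
  have "xs ! k \<in> set xs" "set xs \<subseteq> {1..n}"
    using assms unfolding mindices_def by auto
  then show ?thesis by blast
qed

lemma Omega1_nonneg: "A \<in> Omega1 d n \<Longrightarrow> xs \<in> mindices d n \<Longrightarrow> 0 \<le> A xs"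
  unfolding Omega1_def by blast

lemma Omega1_line_sum:
  "A \<in> Omega1 d n \<Longrightarrow> xs \<in> mindices d n \<Longrightarrow> k < d \<Longrightarrow> (\<Sum>j=1..n. A (xs[k := j])) = 1"
  unfolding Omega1_def by blast

lemma mprod_nonneg:
  assumes "A \<in> Omega1 p n" "B \<in> Omega1 q n" "1 \<le> p" "1 \<le> q"
    and xs: "xs \<in> mindices (p + q - 2) n"
  shows "0 \<le> mprod p n A B xs"
  unfolding mprod_def using assms
  by (intro sum_nonneg mult_nonneg_nonneg Omega1_nonneg[OF assms(1) mindices_take_append[OF xs]]
      Omega1_nonneg[OF assms(2) mindices_Cons_drop[OF xs]]) auto

lemma mprod_list_update_left:
  assumes "k < p - 1" "p - 1 \<le> length xs"
  shows "mprod p n A B (xs[k := i])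
    = (\<Sum>j=1..n. A ((take (p - 1) xs @ [j])[k := i]) * B (j # drop (p - 1) xs))"
  using assms unfolding mprod_def by (simp add: take_update_swap list_update_append)

lemma mprod_list_update_right:
  assumes "p - 1 \<le> k"
  shows "mprod p n A B (xs[k := i])
    = (\<Sum>j=1..n. A (take (p - 1) xs @ [j]) * B ((j # drop (p - 1) xs)[Suc (k - (p - 1)) := i]))"
  using assms unfolding mprod_def by (simp add: drop_update_swap)

lemma mprod_line_sum_left:
  assumes "A \<in> Omega1 p n" "B \<in> Omega1 q n" "1 \<le> p" "1 \<le> q"
    and xs: "xs \<in> mindices (p + q - 2) n" and "k < p - 1"
  shows "(\<Sum>i=1..n. mprod p n A B (xs[k := i])) = 1"
proof -
  have len: "length xs = p + q - 2"
    using xs unfolding mindices_def by simp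
  have A_line: "(\<Sum>i=1..n. A ((take (p - 1) xs @ [j])[k := i])) = 1" if "j \<in> {1..n}" for j
    using assms that by (intro Omega1_line_sum[OF assms(1) mindices_take_append[OF xs]]) auto
  \<comment> \<open>\<open>xs ! k\<close> only serves as some index in \<open>{1..n}\<close> to fill the varying coordinate\<close>
  have some_index: "xs ! k \<in> {1..n}"
    using assms by (intro mindices_nth[OF xs]) auto
  have "(\<Sum>i=1..n. mprod p n A B (xs[k := i]))
      = (\<Sum>j=1..n. (\<Sum>i=1..n. A ((take (p - 1) xs @ [j])[k := i])) * B (j # drop (p - 1) xs))"
    using assms len
    by (simp add: mprod_list_update_left sum_distrib_right) (rule sum.swap)
  also have "\<dots> = (\<Sum>j=1..n. B ((xs ! k # drop (p - 1) xs)[0 := j]))"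
    by (intro sum.cong refl) (simp add: A_line[simplified])
  also have "\<dots> = 1"
    using assms some_index by (intro Omega1_line_sum[OF assms(2) mindices_Cons_drop[OF xs]]) auto
  finally show ?thesis .
qed

lemma mprod_line_sum_right:
  assumes "A \<in> Omega1 p n" "B \<in> Omega1 q n" "1 \<le> p" "1 \<le> q"
    and xs: "xs \<in> mindices (p + q - 2) n" and "p - 1 \<le> k" "k < p + q - 2"
  shows "(\<Sum>i=1..n. mprod p n A B (xs[k := i])) = 1"
proof -
  have len: "length xs = p + q - 2"
    using xs unfolding mindices_def by simp
  have B_line: "(\<Sum>i=1..n. B ((j # drop (p - 1) xs)[Suc (k - (p - 1)) := i])) = 1"
    if "j \<in> {1..n}" for j
    using assms that by (intro Omega1_line_sum[OF assms(2) mindices_Cons_drop[OF xs]]) auto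
  have some_index: "xs ! k \<in> {1..n}"
    using assms by (intro mindices_nth[OF xs]) auto
  have "(\<Sum>i=1..n. mprod p n A B (xs[k := i]))
      = (\<Sum>j=1..n. A (take (p - 1) xs @ [j])
                    * (\<Sum>i=1..n. B ((j # drop (p - 1) xs)[Suc (k - (p - 1)) := i])))"
    using assms
    by (simp add: mprod_list_update_right sum_distrib_left) (rule sum.swap)
  also have "\<dots> = (\<Sum>j=1..n. A ((take (p - 1) xs @ [xs ! k])[p - 1 := j]))"
  proof (intro sum.cong refl)
    fix j assume "j \<in> {1..n}"
    then show "A (take (p - 1) xs @ [j]) * (\<Sum>i=1..n. B ((j # drop (p - 1) xs)[Suc (k - (p - 1)) := i]))
        = A ((take (p - 1) xs @ [xs ! k])[p - 1 := j])"
      using assms len by (simp only: B_line) (simp add: list_update_append)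
  qed
  also have "\<dots> = 1"
    using assms some_index by (intro Omega1_line_sum[OF assms(1) mindices_take_append[OF xs]]) auto
  finally show ?thesis .
qed

theorem lemma3p4:
  fixes p q n :: nat and A B :: "nat list \<Rightarrow> real"
  assumes "p \<ge> 2" and "q \<ge> 2" and "n \<ge> 1"
    and "A \<in> Omega1 p n" and "B \<in> Omega1 q n"
  shows "mprod p n A B \<in> Omega1 (p + q - 2) n"
  unfolding Omega1_def
proof (intro CollectI conjI ballI allI impI)
  fix xs assume "xs \<in> mindices (p + q - 2) n"
  then show "0 \<le> mprod p n A B xs"
    using assms by (intro mprod_nonneg) auto
next
  fix xs k assume "xs \<in> mindices (p + q - 2) n" "k < p + q - 2"
  then show "(\<Sum>i=1..n. mprod p n A B (xs[k := i])) = 1"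
    using assms mprod_line_sum_left[of A p n B q xs k] mprod_line_sum_right[of A p n B q xs k]
    by (cases "k < p - 1") auto
qed

end
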